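(* Let $(X,\mathcal R,\mu)$ be a measure space, i.e. $X$ is a set, $\mathcal R$ is a covering ring of $X$ and $\mu:\mathcal R\to\mathbf K$ is a measure. Then there exist a Hausdorff zero-dimensional space $(Y,\tau_{\mathcal G})$, whose topology $\tau_{\mathcal G}$ has as a base a covering ring $\mathcal G$ of $Y$ with $\mathcal G=\pi(\mathcal R)$, and a quotient mapping $\pi:X\to Y$, such that $\nu:=\pi(\mu)$ is a measure on $(Y,\mathcal G)$, i.e. $(Y,\mathcal G,\nu)$ is a measure space.
   Context: $\mathbf K$ is a field with a nontrivial non-Archimedean valuation $|\cdot|$, $\mathbf K\supset\mathbf Q_p$, complete as an ultrametric space. A covering ring $\mathcal R$ of a set $X$ is a family of subsets of $X$ closed under finite unions, finite intersections and set differences, whose union is $X$. A subfamily $\mathcal S\subset\mathcal R$ is shrinking if for all $A,B\in\mathcal S$ there is $C\in\mathcal S$ with $C\subset A\cap B$; for $f:\mathcal R\to\mathbf K$, $\lim_{A\in\mathcal S}f(A)=0$ means that for each $\epsilon>0$ there is $B\in\mathcal S$ with $|f(A)|\le\epsilon$ for all $A\in\mathcal S$ with $A\subset B$. A measure $\mu:\mathcal R\to\mathbf K$ is a map such that (i) $\mu(A\cup B)=\mu(A)+\mu(B)$ for disjoint $A,B\in\mathcal R$; (ii) $\|A\|_\mu:=\sup\{|\mu(B)|:B\in\mathcal R,B\subset A\}<\infty$ for each $A\in\mathcal R$; (iii) $\lim_{A\in\mathcal S}\mu(A)=0$ for every shrinking $\mathcal S\subset\mathcal R$ with $\bigcap_{S\in\mathcal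 S}S=\emptyset$. A covering ring $\mathcal R$ defines on $X$ the topology $\tau_{\mathcal R}$ with base $\mathcal R$ (all elements of $\mathcal R$ are clopen); a space is zero-dimensional if it has a base of clopen sets. If $\pi:X\to Y$ satisfies $\pi^{-1}(\mathcal G)\subset\mathcal R$, the image measure is $\pi(\mu)(A):=\mu(\pi^{-1}(A))$ for $A\in\mathcal G$. *)

theory Defs
  imports "HOL-Analysis.Analysis"
begin

text \<open>A complete field with a nontrivial non-Archimedean absolute value, containing Q_p
  (char 0, complete, and the valuation restricted to Q is p-adic, i.e. |p| < 1 for a prime p).\<close>
definition nonarch_complete_field :: "('k::field_char_0 \<Rightarrow> real) \<Rightarrow> bool" where
  "nonarch_complete_field v \<longleftrightarrow>
     (\<forall>x. 0 \<le> v x) \<and> (\<forall>x. v x = 0 \<longleftrightarrow> x = 0) \<and>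
     (\<forall>x y. v (x * y) = v x * v y) \<and>
     (\<forall>x y. v (x + y) \<le> max (v x) (v y)) \<and>
     (\<exists>x. v x \<noteq> 0 \<and> v x \<noteq> 1) \<and>
     (\<forall>s::nat \<Rightarrow> 'k. (\<forall>e>0. \<exists>N. \<forall>m\<ge>N. \<forall>n\<ge>N. v (s m - s n) < e)
          \<longrightarrow> (\<exists>l. \<forall>e>0. \<exists>N. \<forall>n\<ge>N. v (s n - l) < e)) \<and>
     (\<exists>p::nat. prime p \<and> v (of_nat p) < 1)"

definition covering_ring :: "'a set \<Rightarrow> 'a set set \<Rightarrow> bool" where
  "covering_ring X R \<longleftrightarrow>
     R \<subseteq> Pow X \<and> \<Union>R = X \<and>
     (\<forall>A\<in>R. \<forall>B\<in>R. A \<union> B \<in> R \<and> A \<inter> B \<in> R \<and> A - B \<in> R)"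

definition shrinking :: "'a set set \<Rightarrow> bool" where
  "shrinking S \<longleftrightarrow> (\<forall>A\<in>S. \<forall>B\<in>S. \<exists>C\<in>S. C \<subseteq> A \<inter> B)"

definition lim_zero_along :: "('k \<Rightarrow> real) \<Rightarrow> 'a set set \<Rightarrow> ('a set \<Rightarrow> 'k) \<Rightarrow> bool" where
  "lim_zero_along v S f \<longleftrightarrow>
     (\<forall>e>0. \<exists>B\<in>S. \<forall>A\<in>S. A \<subseteq> B \<longrightarrow> v (f A) \<le> e)"

definition is_measure ::
  "('k::field \<Rightarrow> real) \<Rightarrow> 'a set \<Rightarrow> 'a set set \<Rightarrow> ('a set \<Rightarrow> 'k) \<Rightarrow> bool" where
  "is_measure v X R \<mu> \<longleftrightarrow>
     (\<forall>A\<in>R. \<forall>B\<in>R. A \<inter> B = {} \<longrightarrow> \<mu> (A \<union> B) = \<mu> A + \<mu> B) \<and>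
     (\<forall>A\<in>R. bdd_above ((\<lambda>B. v (\<mu> B)) ` {B\<in>R. B \<subseteq> A})) \<and>
     (\<forall>S. S \<subseteq> R \<and> shrinking S \<and> \<Inter>S = {} \<longrightarrow> lim_zero_along v S \<mu>)"

abbreviation ring_topology :: "'a set set \<Rightarrow> 'a topology" where
  "ring_topology R \<equiv> topology_generated_by R"

definition image_measure :: "'a set \<Rightarrow> ('a \<Rightarrow> 'b) \<Rightarrow> ('a set \<Rightarrow> 'k) \<Rightarrow> 'b set \<Rightarrow> 'k" where
  "image_measure X \<pi> \<mu> A = \<mu> {x\<in>X. \<pi> x \<in> A}"

end

theory Submission
  imports Defs
begin

text \<open>Identify the points of \<open>X\<close> that no set of \<open>R\<close> separates, and let \<open>\<pi>\<close> send a point to its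
  class. Every \<open>A \<in> R\<close> is a union of classes, so \<open>A \<mapsto> \<pi> ` A\<close> is a lattice isomorphism from \<open>R\<close>
  onto \<open>G\<close> with inverse \<open>\<pi>\<^sup>-\<^sup>1\<close>; hence \<open>G\<close> is a covering ring separating the points of \<open>Y\<close>. A
  topology with a base ring of clopen sets that separates points is zero-dimensional and
  Hausdorff. The map \<open>\<pi>\<close> is continuous and open, hence a quotient map, and \<open>\<nu> = \<mu> \<circ> \<pi>\<^sup>-\<^sup>1\<close>
  inherits the three measure axioms because \<open>\<pi>\<^sup>-\<^sup>1\<close> maps \<open>G\<close> into \<open>R\<close> and preserves inclusion.\<close>

lemma covering_ring_subset: "covering_ring X R \<Longrightarrow> A \<in> R \<Longrightarrow> A \<subseteq> X"
  and covering_ring_cover: "covering_ring X R \<Longrightarrow> x \<in> X \<Longrightarrow> \<exists>A\<in>R. x \<in> A"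
  and covering_ring_Int: "covering_ring X R \<Longrightarrow> A \<in> R \<Longrightarrow> B \<in> R \<Longrightarrow> A \<inter> B \<in> R"
  and covering_ring_Diff: "covering_ring X R \<Longrightarrow> A \<in> R \<Longrightarrow> B \<in> R \<Longrightarrow> A - B \<in> R"
  and topspace_ring_topology: "covering_ring X R \<Longrightarrow> topspace (ring_topology R) = X"
  by (auto simp: covering_ring_def)

lemma openin_ring_topology_iff:
  assumes "\<And>A B. A \<in> S \<Longrightarrow> B \<in> S \<Longrightarrow> A \<inter> B \<in> S"
  shows "openin (ring_topology S) U \<longleftrightarrow> (\<exists>F\<subseteq>S. U = \<Union>F)"
proof
  assume "openin (ring_topology S) U"
  moreover have "istopology (arbitrary union_of (\<lambda>A. A \<in> S))"
    by (rule istopology_base) (rule assms)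
  moreover have "(arbitrary union_of (\<lambda>A. A \<in> S)) A" if "A \<in> S" for A
    using that by (simp add: union_of_inc arbitrary_def)
  ultimately have "(arbitrary union_of (\<lambda>A. A \<in> S)) U"
    unfolding openin_topology_generated_by_iff by (rule generate_topology_on_coarsest[rotated 2])
  then show "\<exists>F\<subseteq>S. U = \<Union>F"
    by (auto simp: union_of_def)
next
  assume "\<exists>F\<subseteq>S. U = \<Union>F"
  then show "openin (ring_topology S) U"
    by (auto intro: topology_generated_by_Basis)
qed

lemma closedin_ring_topology:
  assumes "covering_ring X R" "B \<in> R"
  shows "closedin (ring_topology R) B"
proof -
  have complement: "X - B = \<Union>((\<lambda>A. A - B) ` R)"
    using assms by (auto simp: covering_ring_def)
  have "(\<lambda>A. A - B) ` R \<subseteq> R"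
    using assms covering_ring_Diff by blast
  then have "openin (ring_topology R) (X - B)"
    unfolding complement by (intro openin_Union) (auto intro: topology_generated_by_Basis)
  then show ?thesis
    unfolding closedin_def topspace_ring_topology[OF assms(1)]
    using assms covering_ring_subset by blast
qed

lemma ring_topology_dim_le_0:
  assumes "covering_ring X R"
  shows "ring_topology R dim_le 0"
  unfolding dimension_le_0_neighbourhood_base_of_clopen neighbourhood_base_of
proof (intro allI impI)
  fix W x
  assume "openin (ring_topology R) W \<and> x \<in> W"
  then obtain F where "F \<subseteq> R" "W = \<Union>F" "x \<in> W"
    by (auto simp: openin_ring_topology_iff[OF covering_ring_Int[OF assms]])
  then obtain B where B: "B \<in> R" "x \<in> B" "B \<subseteq> W"
    by blast
  have "openin (ring_topology R) B" "closedin (ring_topology R) B"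
    using B(1) topology_generated_by_Basis closedin_ring_topology[OF assms] by auto
  then show "\<exists>U V. openin (ring_topology R) U \<and>
      (closedin (ring_topology R) V \<and> openin (ring_topology R) V) \<and> x \<in> U \<and> U \<subseteq> V \<and> V \<subseteq> W"
    using B(2,3) by blast
qed

lemma Hausdorff_space_ring_topology:
  assumes R: "covering_ring X R"
    and separating: "\<And>x y. x \<in> X \<Longrightarrow> y \<in> X \<Longrightarrow> x \<noteq> y \<Longrightarrow> \<exists>A\<in>R. x \<in> A \<longleftrightarrow> y \<notin> A"
  shows "Hausdorff_space (ring_topology R)"
proof -
  have separated: "\<exists>U V. openin (ring_topology R) U \<and> openin (ring_topology R) V \<and>
      x \<in> U \<and> y \<in> V \<and> disjnt U V"
    if "A \<in> R" "x \<in> A" "y \<in> X" "y \<notin> A" for A x y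
  proof -
    obtain B where "B \<in> R" "y \<in> B"
      using covering_ring_cover[OF R \<open>y \<in> X\<close>] by blast
    moreover have "B - A \<in> R"
      using R \<open>B \<in> R\<close> \<open>A \<in> R\<close> by (rule covering_ring_Diff)
    ultimately show ?thesis
      using that by (intro exI[of _ A] exI[of _ "B - A"]) (auto simp: disjnt_def topology_generated_by_Basis)
  qed
  show ?thesis
    unfolding Hausdorff_space_def topspace_ring_topology[OF R]
  proof (intro allI impI)
    fix x y
    assume xy: "x \<in> X \<and> y \<in> X \<and> x \<noteq> y"
    then obtain A where A: "A \<in> R" "x \<in> A \<longleftrightarrow> y \<notin> A"
      using separating[of x y] by auto
    show "\<exists>U V. openin (ring_topology R) U \<and> openin (ring_topology R) V \<and>
        x \<in> U \<and> y \<in> V \<and> disjnt U V"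
    proof (cases "x \<in> A")
      case True
      then show ?thesis
        using separated[OF A(1) True] A(2) xy by simp
    next
      case False
      then obtain U V where "openin (ring_topology R) U" "openin (ring_topology R) V"
          "y \<in> U" "x \<in> V" "disjnt U V"
        using separated[OF A(1), of y x] A(2) xy by auto
      then show ?thesis
        by (meson disjnt_sym)
    qed
  qed
qed

lemma covering_ring_image:
  assumes R: "covering_ring X R"
    and saturated: "\<And>A. A \<in> R \<Longrightarrow> {x\<in>X. \<pi> x \<in> \<pi> ` A} = A"
  shows "covering_ring (\<pi> ` X) ((\<lambda>A. \<pi> ` A) ` R)"
proof -
  have Int: "\<pi> ` A \<inter> \<pi> ` B = \<pi> ` (A \<inter> B)" and Diff: "\<pi> ` A - \<pi> ` B = \<pi> ` (A - B)"
    if "A \<in> R" "B \<in> R" for A B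
  proof -
    have "x \<in> B" if "x \<in> A" "\<pi> x \<in> \<pi> ` B" for x
    proof -
      have "x \<in> {x\<in>X. \<pi> x \<in> \<pi> ` B}"
        using that covering_ring_subset[OF R \<open>A \<in> R\<close>] by blast
      then show ?thesis
        by (simp only: saturated[OF \<open>B \<in> R\<close>])
    qed
    then show "\<pi> ` A \<inter> \<pi> ` B = \<pi> ` (A \<inter> B)" "\<pi> ` A - \<pi> ` B = \<pi> ` (A - B)"
      by auto
  qed
  show ?thesis
    unfolding covering_ring_def
  proof (intro conjI ballI)
    show "(\<lambda>A. \<pi> ` A) ` R \<subseteq> Pow (\<pi> ` X)"
      using covering_ring_subset[OF R] by blast
    show "\<Union>((\<lambda>A. \<pi> ` A) ` R) = \<pi> ` X"
      using R by (auto simp: covering_ring_def)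
  next
    fix A' B'
    assume "A' \<in> (\<lambda>A. \<pi> ` A) ` R" "B' \<in> (\<lambda>A. \<pi> ` A) ` R"
    then obtain A B where AB: "A \<in> R" "B \<in> R" and "A' = \<pi> ` A" "B' = \<pi> ` B"
      by blast
    moreover have "A \<union> B \<in> R" "A \<inter> B \<in> R" "A - B \<in> R"
      using R AB by (auto simp: covering_ring_def)
    ultimately show "A' \<union> B' \<in> (\<lambda>A. \<pi> ` A) ` R" "A' \<inter> B' \<in> (\<lambda>A. \<pi> ` A) ` R"
        "A' - B' \<in> (\<lambda>A. \<pi> ` A) ` R"
      by (auto simp only: Int[OF AB] Diff[OF AB] image_Un[symmetric] intro: imageI)
  qed
qed

lemma quotient_map_ring_topology_image:
  assumes R: "covering_ring X R"
    and measurable: "\<And>A. A \<in> R \<Longrightarrow> {x\<in>X. \<pi> x \<in> \<pi> ` A} \<in> R"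
  shows "quotient_map (ring_topology R) (ring_topology ((\<lambda>A. \<pi> ` A) ` R)) \<pi>"
proof -
  let ?G = "(\<lambda>A. \<pi> ` A) ` R"
  have topR: "topspace (ring_topology R) = X"
    using R by (rule topspace_ring_topology)
  have "continuous_map (ring_topology R) (ring_topology ?G) \<pi>"
  proof (rule continuous_on_generated_topo)
    fix B assume "B \<in> ?G"
    then have "\<pi> -` B \<inter> X \<in> R"
      using measurable by (auto simp: Int_def vimage_def conj_commute)
    then show "openin (ring_topology R) (\<pi> -` B \<inter> topspace (ring_topology R))"
      unfolding topR by (rule topology_generated_by_Basis)
  qed (use R in \<open>auto simp: covering_ring_def\<close>)
  moreover have "open_map (ring_topology R) (ring_topology ?G) \<pi>"
    unfolding open_map_def
  proof (intro allI impI)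
    fix U assume "openin (ring_topology R) U"
    then obtain F where "F \<subseteq> R" "U = \<Union>F"
      by (auto simp: openin_ring_topology_iff[OF covering_ring_Int[OF R]])
    then have "openin (ring_topology ?G) (\<Union>((\<lambda>A. \<pi> ` A) ` F))"
      by (intro openin_Union) (auto intro: topology_generated_by_Basis)
    then show "openin (ring_topology ?G) (\<pi> ` U)"
      by (simp add: \<open>U = \<Union>F\<close> image_Union)
  qed
  ultimately show ?thesis
    by (simp add: continuous_open_quotient_map image_Union)
qed

lemma shrinking_image_mono:
  assumes "mono f" "shrinking S"
  shows "shrinking (f ` S)"
  unfolding shrinking_def
proof (intro ballI)
  fix A' B'
  assume "A' \<in> f ` S" "B' \<in> f ` S"
  then obtain A B where "A \<in> S" "B \<in> S" and A'B': "A' = f A" "B' = f B"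
    by blast
  then obtain C where "C \<in> S" "C \<subseteq> A" "C \<subseteq> B"
    using assms(2) unfolding shrinking_def by (meson le_inf_iff)
  then have "f C \<subseteq> A' \<inter> B'"
    unfolding A'B' using monoD[OF assms(1)] by (simp only: le_inf_iff)
  then show "\<exists>C'\<in>f ` S. C' \<subseteq> A' \<inter> B'"
    using \<open>C \<in> S\<close> by blast
qed

lemma lim_zero_along_image_mono:
  assumes "mono f" "lim_zero_along v (f ` S) \<mu>"
  shows "lim_zero_along v S (\<lambda>A. \<mu> (f A))"
  unfolding lim_zero_along_def
proof (intro allI impI)
  fix e :: real
  assume "e > 0"
  then obtain B where "B \<in> S" and small: "\<And>A'. A' \<in> f ` S \<Longrightarrow> A' \<subseteq> f B \<Longrightarrow> v (\<mu> A') \<le> e"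
    using assms(2) unfolding lim_zero_along_def by (metis imageE)
  have "v (\<mu> (f A)) \<le> e" if "A \<in> S" "A \<subseteq> B" for A
    using small[OF imageI[OF that(1)] monoD[OF assms(1) that(2)]] .
  then show "\<exists>B\<in>S. \<forall>A\<in>S. A \<subseteq> B \<longrightarrow> v (\<mu> (f A)) \<le> e"
    using \<open>B \<in> S\<close> by blast
qed

lemma is_measure_image_measure:
  assumes \<mu>: "is_measure v X R \<mu>"
    and measurable: "\<And>B. B \<in> G \<Longrightarrow> {x\<in>X. \<pi> x \<in> B} \<in> R"
  shows "is_measure v Y G (image_measure X \<pi> \<mu>)"
proof -
  define P where "P B = {x\<in>X. \<pi> x \<in> B}" for B
  have \<nu>: "image_measure X \<pi> \<mu> = (\<lambda>B. \<mu> (P B))"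
    by (simp add: image_measure_def P_def fun_eq_iff)
  have "mono P"
    unfolding mono_def P_def by blast
  have PG: "B \<in> G \<Longrightarrow> P B \<in> R" for B
    using measurable by (simp add: P_def)
  have \<mu>_additive: "\<And>A B. A \<in> R \<Longrightarrow> B \<in> R \<Longrightarrow> A \<inter> B = {} \<Longrightarrow> \<mu> (A \<union> B) = \<mu> A + \<mu> B"
    and \<mu>_bounded: "\<And>A. A \<in> R \<Longrightarrow> bdd_above ((\<lambda>B. v (\<mu> B)) ` {B\<in>R. B \<subseteq> A})"
    and \<mu>_continuous: "\<And>S. S \<subseteq> R \<Longrightarrow> shrinking S \<Longrightarrow> \<Inter>S = {} \<Longrightarrow> lim_zero_along v S \<mu>"
    using \<mu> unfolding is_measure_def by simp_all
  have additive: "\<mu> (P (A \<union> B)) = \<mu> (P A) + \<mu> (P B)" if "A \<in> G" "B \<in> G" "A \<inter> B = {}" for A B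
  proof -
    have "P (A \<union> B) = P A \<union> P B" "P A \<inter> P B = {}"
      using that(3) unfolding P_def by blast+
    then show ?thesis
      using \<mu>_additive[OF PG[OF that(1)] PG[OF that(2)]] by simp
  qed
  have bounded: "bdd_above ((\<lambda>B. v (\<mu> (P B))) ` {B\<in>G. B \<subseteq> A})" if "A \<in> G" for A
  proof (rule bdd_above_mono)
    show "bdd_above ((\<lambda>B. v (\<mu> B)) ` {B\<in>R. B \<subseteq> P A})"
      using \<mu>_bounded[OF PG[OF that]] .
    have "P B \<in> {B\<in>R. B \<subseteq> P A}" if "B \<in> G" "B \<subseteq> A" for B
      using PG[OF that(1)] monoD[OF \<open>mono P\<close> that(2)] by blast
    then show "(\<lambda>B. v (\<mu> (P B))) ` {B\<in>G. B \<subseteq> A} \<subseteq> (\<lambda>B. v (\<mu> B)) ` {B\<in>R. B \<subseteq> P A}"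
      by blast
  qed
  have continuous: "lim_zero_along v S (\<lambda>B. \<mu> (P B))"
    if "S \<subseteq> G" "shrinking S" "\<Inter>S = {}" for S
  proof (rule lim_zero_along_image_mono[OF \<open>mono P\<close>], rule \<mu>_continuous)
    show "P ` S \<subseteq> R"
      using PG that(1) by blast
    show "shrinking (P ` S)"
      using \<open>mono P\<close> that(2) by (rule shrinking_image_mono)
    have "S \<noteq> {}"
      using that(3) by blast
    then show "\<Inter>(P ` S) = {}"
      using that(3) unfolding P_def by blast
  qed
  show ?thesis
    unfolding is_measure_def \<nu>
    by (intro conjI ballI allI impI) (simp_all add: additive bounded continuous)
qed

definition inseparable_class :: "'a set set \<Rightarrow> 'a set \<Rightarrow> 'a \<Rightarrow> 'a set" where
  "inseparable_class R X x = {y\<in>X. \<forall>A\<in>R. x \<in> A \<longleftrightarrow> y \<in> A}"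

lemma inseparable_class_eq_iff:
  assumes "x \<in> X" "y \<in> X"
  shows "inseparable_class R X x = inseparable_class R X y \<longleftrightarrow> (\<forall>A\<in>R. x \<in> A \<longleftrightarrow> y \<in> A)"
  using assms unfolding inseparable_class_def by blast

lemma inseparable_class_mem_image_iff:
  assumes R: "covering_ring X R" and "A \<in> R" "x \<in> X"
  shows "inseparable_class R X x \<in> inseparable_class R X ` A \<longleftrightarrow> x \<in> A"
proof
  assume "inseparable_class R X x \<in> inseparable_class R X ` A"
  then obtain a where "a \<in> A" "inseparable_class R X x = inseparable_class R X a"
    by blast
  moreover have "a \<in> X"
    using covering_ring_subset[OF R \<open>A \<in> R\<close>] \<open>a \<in> A\<close> by blast
  ultimately show "x \<in> A"
    using inseparable_class_eq_iff[OF \<open>x \<in> X\<close>, of a R] \<open>A \<in> R\<close> by simp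
qed (rule imageI)

lemma inseparable_class_saturated:
  assumes R: "covering_ring X R" and "A \<in> R"
  shows "{x\<in>X. inseparable_class R X x \<in> inseparable_class R X ` A} = A"
  using inseparable_class_mem_image_iff[OF assms] covering_ring_subset[OF assms] by auto

lemma inseparable_class_image_separating:
  assumes R: "covering_ring X R"
    and "p \<in> inseparable_class R X ` X" "q \<in> inseparable_class R X ` X" "p \<noteq> q"
  shows "\<exists>B\<in>(\<lambda>A. inseparable_class R X ` A) ` R. p \<in> B \<longleftrightarrow> q \<notin> B"
proof -
  obtain x y where "x \<in> X" "y \<in> X" and p: "p = inseparable_class R X x"
    and q: "q = inseparable_class R X y"
    using assms(2,3) by blast
  then have "\<not> (\<forall>A\<in>R. x \<in> A \<longleftrightarrow> y \<in> A)"
    using \<open>p \<noteq> q\<close> inseparable_class_eq_iff[of x X y R] by simp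
  then obtain A where "A \<in> R" "x \<in> A \<longleftrightarrow> y \<notin> A"
    by blast
  then have "p \<in> inseparable_class R X ` A \<longleftrightarrow> q \<notin> inseparable_class R X ` A"
    unfolding p q using inseparable_class_mem_image_iff[OF R \<open>A \<in> R\<close>] \<open>x \<in> X\<close> \<open>y \<in> X\<close>
    by simp
  then show ?thesis
    using \<open>A \<in> R\<close> by blast
qed

theorem proposition2p6:
  fixes v :: "'k::field_char_0 \<Rightarrow> real"
    and X :: "'a set" and R :: "'a set set" and \<mu> :: "'a set \<Rightarrow> 'k"
  assumes "nonarch_complete_field v"
    and "covering_ring X R"
    and "is_measure v X R \<mu>"
  shows "\<exists>(Y :: 'a set set) (G :: 'a set set set) (\<pi> :: 'a \<Rightarrow> 'a set).
           covering_ring Y G \<and>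
           G = (\<lambda>A. \<pi> ` A) ` R \<and>
           (\<forall>U. openin (ring_topology G) U \<longleftrightarrow> (\<exists>F\<subseteq>G. U = \<Union>F)) \<and>
           Hausdorff_space (ring_topology G) \<and>
           ring_topology G dim_le 0 \<and>
           quotient_map (ring_topology R) (ring_topology G) \<pi> \<and>
           (\<forall>A\<in>G. {x\<in>X. \<pi> x \<in> A} \<in> R) \<and>
           is_measure v Y G (image_measure X \<pi> \<mu>)"
proof -
  define \<pi> where "\<pi> = inseparable_class R X"
  define G where "G = (\<lambda>A. \<pi> ` A) ` R"
  have saturated: "\<And>A. A \<in> R \<Longrightarrow> {x\<in>X. \<pi> x \<in> \<pi> ` A} = A"
    unfolding \<pi>_def using assms(2) by (rule inseparable_class_saturated)
  have G: "covering_ring (\<pi> ` X) G"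
    unfolding G_def using assms(2) saturated by (rule covering_ring_image)
  have measurable: "\<forall>B\<in>G. {x\<in>X. \<pi> x \<in> B} \<in> R"
    using saturated by (auto simp: G_def)
  have base: "openin (ring_topology G) U \<longleftrightarrow> (\<exists>F\<subseteq>G. U = \<Union>F)" for U
    by (rule openin_ring_topology_iff) (rule covering_ring_Int[OF G])
  have Hausdorff: "Hausdorff_space (ring_topology G)"
    unfolding G_def \<pi>_def
    by (rule Hausdorff_space_ring_topology[OF G[unfolded G_def \<pi>_def]
          inseparable_class_image_separating[OF assms(2)]])
  have quotient: "quotient_map (ring_topology R) (ring_topology G) \<pi>"
    unfolding G_def using assms(2) by (rule quotient_map_ring_topology_image) (simp add: saturated)
  have "is_measure v (\<pi> ` X) G (image_measure X \<pi> \<mu>)"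
    using assms(3) by (rule is_measure_image_measure) (use measurable in blast)
  then show ?thesis
    using G G_def base Hausdorff ring_topology_dim_le_0[OF G] quotient measurable
    by (intro exI[of _ "\<pi> ` X"] exI[of _ G] exI[of _ \<pi>] conjI allI) (assumption | fact)+
qed

end
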